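(* For each class $X\in\{\mathrm{sing},\mathrm{cont},\mathrm{op},\mathrm{clos}\}$ choose independently a pair $(\alpha_X,\beta_X)\in\{(2,1),(1,2)\}$. Then for every $n\ge1$, $$\sum_{\sigma\in S_n} q^{\,\mathrm{run}(\sigma)-1+\sum_{X}\left(\alpha_X\,\mathrm{lsg}(X)(\sigma)+\beta_X\,\mathrm{rsg}(X)(\sigma)\right)}=[n]_q!.$$
   Context: $[n]_q=\frac{1-q^n}{1-q}$, $[n]_q!=[n]_q\cdots[1]_q$. A permutation $\sigma\in S_n$ is written as the word $\sigma(1)\cdots\sigma(n)$; its runs are the maximal contiguous increasing segments, $\mathrm{run}(\sigma)$ is their number. A run of length $\ge2$ is proper, of length 1 is a singleton run. Classes: $\mathrm{op}(\sigma)$ = first elements of proper runs, $\mathrm{clos}(\sigma)$ = last elements of proper runs, $\mathrm{sing}(\sigma)$ = elements forming singleton runs, $\mathrm{cont}(\sigma)$ = all other elements. For $i\in\{1,\dots,n\}$, $\mathrm{lsg}(i)$ is the number of runs lying strictly to the left of $i$ (not containing $i$) that contain both an element smaller and an element greater than $i$; $\mathrm{rsg}(i)$ is the analogous number to the right. $\mathrm{lsg}(X)(\sigma)=\sum_{i\in X(\sigma)}\mathrm{lsg}(i)$, $\mathrm{rsg}(X)(\sigma)=\sum_{i\in X(\sigma)}\mathrm{rsg}(i)$. *)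

theory Defs
  imports Main "HOL-Combinatorics.Multiset_Permutations"
begin

text \<open>q-integers and q-factorial, written division-free:
  [n]_q = 1 + q + ... + q^(n-1) = (1 - q^n)/(1 - q).\<close>
definition q_int :: "nat \<Rightarrow> 'a::comm_ring_1 \<Rightarrow> 'a" where
  "q_int n q = (\<Sum>j<n. q ^ j)"

definition q_fact :: "nat \<Rightarrow> 'a::comm_ring_1 \<Rightarrow> 'a" where
  "q_fact n q = (\<Prod>k=1..n. q_int k q)"

fun runs :: "nat list \<Rightarrow> nat list list" where
  "runs [] = []"
| "runs [x] = [[x]]"
| "runs (x # y # xs) =
     (if x < y then (let R = runs (y # xs) in (x # hd R) # tl R)
      else [x] # runs (y # xs))"

definition run :: "nat list \<Rightarrow> nat" where
  "run \<sigma> = length (runs \<sigma>)"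

definition run_idx :: "nat list \<Rightarrow> nat \<Rightarrow> nat" where
  "run_idx \<sigma> i = (THE j. j < length (runs \<sigma>) \<and> i \<in> set (runs \<sigma> ! j))"

datatype cls = Sing | Cont | Op | Clos

definition cls_of :: "nat list \<Rightarrow> nat \<Rightarrow> cls" where
  "cls_of \<sigma> i = (let r = runs \<sigma> ! run_idx \<sigma> i in
     if length r = 1 then Sing
     else if i = hd r then Op
     else if i = last r then Clos
     else Cont)"

definition separates :: "nat list \<Rightarrow> nat \<Rightarrow> bool" where
  "separates r i \<longleftrightarrow> (\<exists>a\<in>set r. a < i) \<and> (\<exists>b\<in>set r. i < b)"

definition lsg :: "nat list \<Rightarrow> nat \<Rightarrow> nat" where
  "lsg \<sigma> i = card {j. j < run_idx \<sigma> i \<and> separates (runs \<sigma> ! j) i}"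

definition rsg :: "nat list \<Rightarrow> nat \<Rightarrow> nat" where
  "rsg \<sigma> i = card {j. run_idx \<sigma> i < j \<and> j < length (runs \<sigma>) \<and> separates (runs \<sigma> ! j) i}"

definition lsg_cls :: "cls \<Rightarrow> nat list \<Rightarrow> nat" where
  "lsg_cls X \<sigma> = (\<Sum>i\<in>{i\<in>set \<sigma>. cls_of \<sigma> i = X}. lsg \<sigma> i)"

definition rsg_cls :: "cls \<Rightarrow> nat list \<Rightarrow> nat" where
  "rsg_cls X \<sigma> = (\<Sum>i\<in>{i\<in>set \<sigma>. cls_of \<sigma> i = X}. rsg \<sigma> i)"

end

theory Submission
  imports Defs
begin

(* Build a permutation of {1..n} by inserting the values 1, 2, ..., n in turn into a sequence of
   blocks, the future runs.  A block is open if it will still receive larger values, closed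
   otherwise.  The new maximum m either starts a new block (at the front or right after an open
   block, never right after a closed one) or is appended to an open block, which it may close.
   Since all later values are larger, an open block already counts as containing a value above
   every present one, so the classes and the separating runs of the present values never change.
   Hence inserting m multiplies the weight by q^(a l + b (h - l)), and by one more q if m starts a
   new run, where h is the number of open blocks, l of them lie to the left of m, and (a, b) are the
   weights of the class of m.  For (a, b) in {(2,1), (1,2)} the sum over the admissible positions
   is q^h [h+1]_q.  This yields a three-term recurrence for the generating function W(m, h) of the
   sequences with values 1..m and h open blocks, solved by W(m, h) = [m]_q! e_h(1, q^2, ..., q^m).
   The sequences without open blocks are the permutations cut into their runs, so the sum in
   question is W(n, 0) = [n]_q!. *)

section \<open>\<open>q\<close>-integers and the polynomials \<open>e\<^sub>h(1, q\<^sup>2, \<dots>, q\<^sup>m)\<close>\<close>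

lemma q_int_0 [simp]: "q_int 0 q = 0"
  by (simp add: q_int_def)

lemma q_int_Suc: "q_int (Suc k) q = 1 + q * q_int k q"
  unfolding q_int_def by (subst sum.lessThan_Suc_shift) (simp add: sum_distrib_left)

lemma one_minus_mult_q_int: "(1 - q) * q_int k q = 1 - q ^ k"
proof (induction k)
  case (Suc k)
  have "(1 - q) * q_int (Suc k) q = (1 - q) * q_int k q + (1 - q) * q ^ k"
    by (simp add: q_int_def ring_distribs)
  with Suc show ?case by (simp add: algebra_simps)
qed (simp add: q_int_def)

lemma q_fact_Suc: "q_fact (Suc m) q = q_fact m q * q_int (Suc m) q"
  by (simp add: q_fact_def)

definition esym_var :: "'a::comm_ring_1 \<Rightarrow> nat \<Rightarrow> 'a" where
  "esym_var q j = (if j = 1 then 1 else q ^ j)"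

text \<open>\<open>esym q m h\<close> is the elementary symmetric polynomial \<open>e\<^sub>h(1, q\<^sup>2, q\<^sup>3, \<dots>, q\<^sup>m)\<close>.\<close>
fun esym :: "'a::comm_ring_1 \<Rightarrow> nat \<Rightarrow> nat \<Rightarrow> 'a" where
  "esym q 0 h = (if h = 0 then 1 else 0)"
| "esym q (Suc m) 0 = 1"
| "esym q (Suc m) (Suc h) = esym q m (Suc h) + esym_var q (Suc m) * esym q m h"

definition esym_shift :: "'a::comm_ring_1 \<Rightarrow> nat \<Rightarrow> nat \<Rightarrow> nat \<Rightarrow> 'a" where
  "esym_shift q m d h = (if d \<le> h then esym q m (h - d) else 0)"

lemma esym_0_right [simp]: "esym q m 0 = 1"
  by (cases m) auto

lemma esym_Suc: "esym q (Suc m) h = esym q m h + esym_var q (Suc m) * esym_shift q m 1 h"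
  by (cases h) (auto simp: esym_shift_def)

lemma esym_eq_0: "m < h \<Longrightarrow> esym q m h = 0"
proof (induction m arbitrary: h)
  case (Suc m)
  then show ?case by (cases h) auto
qed simp

text \<open>The recurrence \<open>esym_recurrence\<close> is proved together with this auxiliary
  \<open>q\<close>-difference equation; both fail for \<open>m = 0\<close>.\<close>
definition esym_diff_defect :: "'a::comm_ring_1 \<Rightarrow> nat \<Rightarrow> nat \<Rightarrow> 'a" where
  "esym_diff_defect q k h = (q ^ h - 1) * esym q k h
     + (q ^ Suc h + (if h = 0 then 0 else q ^ (h - 1)) - q - q ^ Suc k) * esym_shift q k 1 h
     + (q ^ h - q ^ Suc (Suc k)) * esym_shift q k 2 h"

lemma esym_diff_defect_1: "esym_diff_defect q 1 h = 0"
proof -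
  consider "h = 0" | "h = 1" | "h = 2" | "h = 3" | h' where "h = Suc (Suc (Suc (Suc h')))"
    by (metis One_nat_def Suc_1 numeral_3_eq_3 not0_implies_Suc)
  then show ?thesis
    by cases (simp_all add: esym_diff_defect_def esym_shift_def esym_var_def numeral_3_eq_3
        eval_nat_numeral algebra_simps)
qed

lemma esym_diff_defect_Suc:
  assumes "k \<ge> 1"
  shows "esym_diff_defect q (Suc k) (Suc (Suc h)) =
    esym_diff_defect q k (Suc (Suc h)) + q ^ Suc (Suc k) * esym_diff_defect q k (Suc h)"
proof -
  have x: "esym_var q (Suc k) = q ^ Suc k" using assms by (simp add: esym_var_def)
  show ?thesis
    by (cases h) (simp_all add: esym_diff_defect_def esym_shift_def x esym_Suc algebra_simps)
qed

lemma esym_diff_defect_eq_0: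
  assumes "k \<ge> 1"
  shows "esym_diff_defect q k h = 0"
  using assms
proof (induction k arbitrary: h rule: dec_induct)
  case base
  show ?case by (rule esym_diff_defect_1)
next
  case (step k)
  have x: "esym_var q (Suc k) = q ^ Suc k" using step(1) by (simp add: esym_var_def)
  consider "h = 0" | "h = 1" | h' where "h = Suc (Suc h')"
    by (metis One_nat_def not0_implies_Suc)
  then show ?case
  proof cases
    case 1
    then show ?thesis by (simp add: esym_diff_defect_def esym_shift_def)
  next
    case 2
    then have "esym_diff_defect q (Suc k) h = esym_diff_defect q k h"
      by (simp add: esym_diff_defect_def esym_shift_def x algebra_simps)
    then show ?thesis using step(3) by simp
  next
    case 3
    then show ?thesis by (simp only: esym_diff_defect_Suc[OF step(1)] step(3)) simp
  qed
qed

definition slot_gf :: "'a::comm_ring_1 \<Rightarrow> nat \<Rightarrow> 'a" where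
  "slot_gf q h = q ^ h * q_int (Suc h) q"

definition slot_gf_prev :: "'a::comm_ring_1 \<Rightarrow> nat \<Rightarrow> 'a" where
  "slot_gf_prev q h = (if h = 0 then 0 else slot_gf q (h - 1))"

definition esym_rec_defect :: "'a::comm_ring_1 \<Rightarrow> nat \<Rightarrow> nat \<Rightarrow> 'a" where
  "esym_rec_defect q m h = q_int (Suc m) q * esym q (Suc m) h
     - (q * slot_gf_prev q h * esym q m (h - 1) + (q * slot_gf q h + slot_gf_prev q h) * esym q m h
        + slot_gf q h * esym q m (Suc h))"

lemma esym_rec_defect_1: "esym_rec_defect q 1 h = 0"
proof -
  consider "h = 0" | "h = 1" | "h = 2" | h' where "h = Suc (Suc (Suc h'))"
    by (metis One_nat_def Suc_1 not0_implies_Suc)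
  then show ?thesis
  proof cases
    case 4
    then show ?thesis by (simp add: esym_rec_defect_def esym_shift_def esym_eq_0)
  qed (simp_all add: esym_rec_defect_def esym_shift_def esym_var_def slot_gf_prev_def slot_gf_def
      q_int_Suc eval_nat_numeral algebra_simps)
qed

lemma esym_rec_defect_Suc:
  assumes "k \<ge> 1"
  shows "esym_rec_defect q (Suc k) h = esym_rec_defect q k h
      + q ^ (k + 3) * (if h = 0 then 0 else esym_rec_defect q k (h - 1))
      - q ^ Suc k * esym_diff_defect q k h
      - q * esym q (Suc k) h * ((1 - q) * q_int k q - 1 + q ^ k)"
proof -
  have x1: "esym_var q (Suc k) = q * q ^ k" using assms by (simp add: esym_var_def)
  have x2: "esym_var q (Suc (Suc k)) = q * q * q ^ k" by (simp add: esym_var_def)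
  have e1: "esym q (Suc k) h' = esym q k h' + q * q ^ k * esym_shift q k 1 h'" for h'
    by (simp add: esym_Suc x1)
  have e2: "esym q (Suc (Suc k)) h' = esym q (Suc k) h' + q * q * q ^ k * esym_shift q (Suc k) 1 h'" for h'
    by (subst esym_Suc) (simp add: x2)
  consider "h = 0" | "h = 1" | h' where "h = Suc (Suc h')"
    by (metis One_nat_def not0_implies_Suc)
  then show ?thesis
    by cases (simp_all add: esym_rec_defect_def esym_diff_defect_def slot_gf_prev_def slot_gf_def
        esym_shift_def e1 e2 x1 x2 q_int_Suc eval_nat_numeral algebra_simps)
qed

lemma esym_rec_defect_eq_0:
  assumes "m \<ge> 1"
  shows "esym_rec_defect q m h = 0"
  using assms
proof (induction m arbitrary: h rule: dec_induct)
  case base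
  show ?case by (rule esym_rec_defect_1)
next
  case (step k)
  have "esym_diff_defect q k h = 0" "(1 - q) * q_int k q - 1 + q ^ k = 0"
    using esym_diff_defect_eq_0[OF step(1)] one_minus_mult_q_int[of q k] by simp_all
  then show ?case using esym_rec_defect_Suc[OF step(1), of q h] step(3) by simp
qed

lemma esym_recurrence:
  assumes "m \<ge> 1"
  shows "q_int (Suc m) q * esym q (Suc m) h
     = q * slot_gf_prev q h * esym q m (h - 1) + (q * slot_gf q h + slot_gf_prev q h) * esym q m h
       + slot_gf q h * esym q m (Suc h)"
  using esym_rec_defect_eq_0[OF assms, of q h] unfolding esym_rec_defect_def by simp

section \<open>Block sequences\<close>

text \<open>A block is a run under construction, flagged \<open>True\<close> if it is open, that is, if it will still
  receive values larger than all present ones.  An open block therefore already separates every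
  value above its minimum, and all its elements but the first are already of class \<open>Cont\<close>.\<close>
type_synonym block = "nat list \<times> bool"

definition blk_separates :: "block \<Rightarrow> nat \<Rightarrow> bool" where
  "blk_separates B i \<longleftrightarrow> (\<exists>x\<in>set (fst B). x < i) \<and> (snd B \<or> (\<exists>y\<in>set (fst B). i < y))"

definition blk_cls :: "block \<Rightarrow> nat \<Rightarrow> cls" where
  "blk_cls B i = (if snd B then (if i = hd (fst B) then Op else Cont)
     else if length (fst B) = 1 then Sing else if i = hd (fst B) then Op
     else if i = last (fst B) then Clos else Cont)"

definition left_weight :: "(cls \<Rightarrow> nat) \<Rightarrow> block \<Rightarrow> block \<Rightarrow> nat" where
  "left_weight \<alpha> B C = (\<Sum>i\<leftarrow>fst C. \<alpha> (blk_cls C i) * of_bool (blk_separates B i))"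

definition right_weight :: "(cls \<Rightarrow> nat) \<Rightarrow> block \<Rightarrow> block \<Rightarrow> nat" where
  "right_weight \<beta> B C = (\<Sum>i\<leftarrow>fst B. \<beta> (blk_cls B i) * of_bool (blk_separates C i))"

definition pair_weight :: "(cls \<Rightarrow> nat) \<Rightarrow> (cls \<Rightarrow> nat) \<Rightarrow> block \<Rightarrow> block \<Rightarrow> nat" where
  "pair_weight \<alpha> \<beta> B C = left_weight \<alpha> B C + right_weight \<beta> B C"

fun sep_weight :: "(cls \<Rightarrow> nat) \<Rightarrow> (cls \<Rightarrow> nat) \<Rightarrow> block list \<Rightarrow> nat" where
  "sep_weight \<alpha> \<beta> [] = 0"
| "sep_weight \<alpha> \<beta> (B # Bs) = (\<Sum>C\<leftarrow>Bs. pair_weight \<alpha> \<beta> B C) + sep_weight \<alpha> \<beta> Bs"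

definition open_count :: "block list \<Rightarrow> nat" where
  "open_count Bs = length (filter snd Bs)"

lemma open_count_Nil [simp]: "open_count [] = 0"
  by (simp add: open_count_def)

lemma open_count_Cons [simp]: "open_count (B # Bs) = of_bool (snd B) + open_count Bs"
  by (simp add: open_count_def)

definition blocks_below :: "nat \<Rightarrow> block list \<Rightarrow> bool" where
  "blocks_below m Bs \<longleftrightarrow> (\<forall>B\<in>set Bs. fst B \<noteq> [] \<and> (\<forall>x\<in>set (fst B). x < m))"

lemma blocks_below_Cons [simp]:
  "blocks_below m (B # Bs) \<longleftrightarrow> fst B \<noteq> [] \<and> (\<forall>x\<in>set (fst B). x < m) \<and> blocks_below m Bs"
  by (auto simp: blocks_below_def)

lemma blocks_below_mono: "blocks_below m Bs \<Longrightarrow> m \<le> m' \<Longrightarrow> blocks_below m' Bs"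
  by (fastforce simp: blocks_below_def)

text \<open>All ways to insert a new block \<open>[m]\<close> with flag \<open>fl\<close>: at the front if \<open>a\<close> holds
  and right after each open block (after a closed block \<open>m\<close> would continue its run).\<close>
fun insert_block :: "bool \<Rightarrow> nat \<Rightarrow> bool \<Rightarrow> block list \<Rightarrow> block list list" where
  "insert_block fl m a [] = (if a then [[([m], fl)]] else [])"
| "insert_block fl m a (B # Bs) = (if a then [([m], fl) # B # Bs] else [])
     @ map ((#) B) (insert_block fl m (snd B) Bs)"

fun extend_block :: "bool \<Rightarrow> nat \<Rightarrow> block list \<Rightarrow> block list list" where
  "extend_block fl m [] = []"
| "extend_block fl m (B # Bs) = (if snd B then [(fst B @ [m], fl) # Bs] else [])
     @ map ((#) B) (extend_block fl m Bs)"

definition new_cls :: "bool \<Rightarrow> cls" where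
  "new_cls fl = (if fl then Op else Sing)"

definition ext_cls :: "bool \<Rightarrow> cls" where
  "ext_cls fl = (if fl then Cont else Clos)"

lemma insert_block_mset:
  "P \<in> set (insert_block fl m a Bs) \<Longrightarrow> mset P = add_mset ([m], fl) (mset Bs)"
  by (induction Bs arbitrary: a P) (auto split: if_splits)

lemma length_insert_block:
  "P \<in> set (insert_block fl m a Bs) \<Longrightarrow> length P = Suc (length Bs)"
  by (induction Bs arbitrary: a P) (auto split: if_splits)

lemma open_count_insert_block:
  "P \<in> set (insert_block fl m a Bs) \<Longrightarrow> open_count P = of_bool fl + open_count Bs"
  by (induction Bs arbitrary: a P) (auto split: if_splits)

lemma length_extend_block: "P \<in> set (extend_block fl m Bs) \<Longrightarrow> length P = length Bs"
  by (induction Bs arbitrary: P) (auto split: if_splits)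

lemma open_count_extend_block:
  "P \<in> set (extend_block fl m Bs) \<Longrightarrow> open_count P + 1 = of_bool fl + open_count Bs"
  by (induction Bs arbitrary: P) (auto split: if_splits)

lemma blk_separates_max:
  assumes "fst B \<noteq> []" "\<forall>x\<in>set (fst B). x < m"
  shows "blk_separates B m \<longleftrightarrow> snd B"
  using assms unfolding blk_separates_def by (cases "fst B") auto

lemma pair_weight_new_right:
  assumes "fst B \<noteq> []" "\<forall>x\<in>set (fst B). x < m"
  shows "pair_weight \<alpha> \<beta> B ([m], fl) = \<alpha> (new_cls fl) * of_bool (snd B)"
  using assms blk_separates_max[OF assms]
  by (auto simp: pair_weight_def left_weight_def right_weight_def blk_separates_def
      blk_cls_def new_cls_def intro!: sum_list_eq_0_iff[THEN iffD2])

lemma pair_weight_new_left: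
  assumes "fst C \<noteq> []" "\<forall>x\<in>set (fst C). x < m"
  shows "pair_weight \<alpha> \<beta> ([m], fl) C = \<beta> (new_cls fl) * of_bool (snd C)"
  using assms blk_separates_max[OF assms]
  by (auto simp: pair_weight_def left_weight_def right_weight_def blk_separates_def
      blk_cls_def new_cls_def intro!: sum_list_eq_0_iff[THEN iffD2])

lemma sep_weight_new_front:
  assumes "blocks_below m Bs"
  shows "sep_weight \<alpha> \<beta> (([m], fl) # Bs) = sep_weight \<alpha> \<beta> Bs + \<beta> (new_cls fl) * open_count Bs"
proof -
  have "(\<Sum>C\<leftarrow>Bs. pair_weight \<alpha> \<beta> ([m], fl) C) = \<beta> (new_cls fl) * open_count Bs"
    using assms by (induction Bs) (auto simp: pair_weight_new_left algebra_simps)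
  then show ?thesis by simp
qed

lemma sum_pair_weight_insert_block:
  assumes "fst B \<noteq> []" "\<forall>x\<in>set (fst B). x < m" "P \<in> set (insert_block fl m a Bs)"
  shows "(\<Sum>C\<leftarrow>P. pair_weight \<alpha> \<beta> B C)
    = (\<Sum>C\<leftarrow>Bs. pair_weight \<alpha> \<beta> B C) + \<alpha> (new_cls fl) * of_bool (snd B)"
proof -
  have "(\<Sum>C\<leftarrow>P. pair_weight \<alpha> \<beta> B C) = (\<Sum>C\<leftarrow>([m], fl) # Bs. pair_weight \<alpha> \<beta> B C)"
    using insert_block_mset[OF assms(3)] by (metis mset.simps(2) mset_map sum_mset_sum_list)
  then show ?thesis using pair_weight_new_right[OF assms(1,2)] by simp
qed

lemma sep_weights_insert_block:
  assumes "blocks_below m Bs"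
  shows "map (sep_weight \<alpha> \<beta>) (insert_block fl m a Bs) =
    map (\<lambda>l. sep_weight \<alpha> \<beta> Bs + \<alpha> (new_cls fl) * l + \<beta> (new_cls fl) * (open_count Bs - l))
      [of_bool (\<not> a)..<Suc (open_count Bs)]"
  using assms
proof (induction Bs arbitrary: a)
  case (Cons B Bs)
  let ?A = "\<alpha> (new_cls fl)" and ?B = "\<beta> (new_cls fl)"
  let ?w = "sep_weight \<alpha> \<beta> (B # Bs)" and ?o = "of_bool (snd B) :: nat" and ?h = "open_count Bs"
  have B: "fst B \<noteq> []" "\<forall>x\<in>set (fst B). x < m" and Bs: "blocks_below m Bs"
    using Cons.prems by auto
  have "map (sep_weight \<alpha> \<beta>) (map ((#) B) (insert_block fl m (snd B) Bs))
      = map (\<lambda>l. ?w + ?A * (?o + l) + ?B * (?h - l)) [of_bool (\<not> snd B)..<Suc ?h]"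
  proof -
    have "sep_weight \<alpha> \<beta> (B # P) = ?A * ?o + ?w - sep_weight \<alpha> \<beta> Bs + sep_weight \<alpha> \<beta> P"
      if "P \<in> set (insert_block fl m (snd B) Bs)" for P
      using sum_pair_weight_insert_block[OF B that] by simp
    then have "map (sep_weight \<alpha> \<beta>) (map ((#) B) (insert_block fl m (snd B) Bs))
        = map (\<lambda>w. ?A * ?o + ?w - sep_weight \<alpha> \<beta> Bs + w) (map (sep_weight \<alpha> \<beta>) (insert_block fl m (snd B) Bs))"
      unfolding map_map by (intro map_cong refl) simp
    then show ?thesis unfolding Cons.IH[OF Bs] map_map by (simp add: o_def)
  qed
  also have "\<dots> = map (\<lambda>l. ?w + ?A * l + ?B * (?o + ?h - l)) [1..<Suc (?o + ?h)]"
    by (cases "snd B") (simp_all add: map_Suc_upt[symmetric] del: upt_Suc)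
  finally have tail: "map (sep_weight \<alpha> \<beta>) (map ((#) B) (insert_block fl m (snd B) Bs))
      = map (\<lambda>l. ?w + ?A * l + ?B * (?o + ?h - l)) [1..<Suc (?o + ?h)]" .
  have front: "sep_weight \<alpha> \<beta> (([m], fl) # B # Bs) = ?w + ?B * (?o + ?h)"
    using sep_weight_new_front[OF Cons.prems] by simp
  show ?case
    using tail front by (cases a) (simp_all add: upt_conv_Cons del: upt_Suc)
qed simp

lemma blk_cls_append:
  assumes "b \<noteq> []" "\<forall>x\<in>set b. x < m" "i \<in> set b"
  shows "blk_cls (b @ [m], fl) i = blk_cls (b, True) i"
  using assms by (cases b) (auto simp: blk_cls_def)

lemma blk_cls_append_max:
  assumes "b \<noteq> []" "\<forall>x\<in>set b. x < m"
  shows "blk_cls (b @ [m], fl) m = ext_cls fl"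
  using assms by (cases b) (auto simp: blk_cls_def ext_cls_def)

lemma blk_separates_append:
  assumes "b \<noteq> []" "i < m"
  shows "blk_separates (b @ [m], fl) i \<longleftrightarrow> blk_separates (b, True) i"
  using assms by (auto simp: blk_separates_def)

lemma pair_weight_extended_right:
  assumes "b \<noteq> []" "\<forall>x\<in>set b. x < m" "fst D \<noteq> []" "\<forall>x\<in>set (fst D). x < m"
  shows "pair_weight \<alpha> \<beta> D (b @ [m], fl) = pair_weight \<alpha> \<beta> D (b, True) + \<alpha> (ext_cls fl) * of_bool (snd D)"
proof -
  have "(\<Sum>i\<leftarrow>b. \<alpha> (blk_cls (b @ [m], fl) i) * of_bool (blk_separates D i))
      = (\<Sum>i\<leftarrow>b. \<alpha> (blk_cls (b, True) i) * of_bool (blk_separates D i))"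
    using blk_cls_append[OF assms(1,2)] by (intro arg_cong[where f = sum_list] map_cong) auto
  moreover have "right_weight \<beta> D (b @ [m], fl) = right_weight \<beta> D (b, True)"
    unfolding right_weight_def using blk_separates_append[OF assms(1)] assms(4)
    by (intro arg_cong[where f = sum_list] map_cong) auto
  ultimately show ?thesis
    using blk_cls_append_max[OF assms(1,2)] blk_separates_max[OF assms(3,4)]
    by (simp add: pair_weight_def left_weight_def)
qed

lemma pair_weight_extended_left:
  assumes "b \<noteq> []" "\<forall>x\<in>set b. x < m" "fst C \<noteq> []" "\<forall>x\<in>set (fst C). x < m"
  shows "pair_weight \<alpha> \<beta> (b @ [m], fl) C = pair_weight \<alpha> \<beta> (b, True) C + \<beta> (ext_cls fl) * of_bool (snd C)"
proof -
  have "(\<Sum>i\<leftarrow>b. \<beta> (blk_cls (b @ [m], fl) i) * of_bool (blk_separates C i))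
      = (\<Sum>i\<leftarrow>b. \<beta> (blk_cls (b, True) i) * of_bool (blk_separates C i))"
    using blk_cls_append[OF assms(1,2)] by (intro arg_cong[where f = sum_list] map_cong) auto
  moreover have "left_weight \<alpha> (b @ [m], fl) C = left_weight \<alpha> (b, True) C"
    unfolding left_weight_def using blk_separates_append[OF assms(1)] assms(4)
    by (intro arg_cong[where f = sum_list] map_cong) auto
  ultimately show ?thesis
    using blk_cls_append_max[OF assms(1,2)] blk_separates_max[OF assms(3,4)]
    by (simp add: pair_weight_def right_weight_def)
qed

lemma sum_pair_weight_extend_block:
  assumes "blocks_below m Bs" "fst D \<noteq> []" "\<forall>x\<in>set (fst D). x < m"
    and "P \<in> set (extend_block fl m Bs)"
  shows "(\<Sum>C\<leftarrow>P. pair_weight \<alpha> \<beta> D C)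
    = (\<Sum>C\<leftarrow>Bs. pair_weight \<alpha> \<beta> D C) + \<alpha> (ext_cls fl) * of_bool (snd D)"
  using assms
proof (induction Bs arbitrary: P)
  case (Cons B Bs)
  from Cons.prems(4) consider "snd B" "P = (fst B @ [m], fl) # Bs"
    | R where "R \<in> set (extend_block fl m Bs)" "P = B # R"
    by (auto split: if_splits)
  then show ?case
  proof cases
    case 1
    then have "B = (fst B, True)" by (cases B) auto
    then show ?thesis using 1 pair_weight_extended_right[of "fst B" m D] Cons.prems by auto
  qed (use Cons in simp)
qed simp

lemma sep_weight_extended_front:
  assumes "blocks_below m (B # Bs)" "snd B"
  shows "sep_weight \<alpha> \<beta> ((fst B @ [m], fl) # Bs)
    = sep_weight \<alpha> \<beta> (B # Bs) + \<beta> (ext_cls fl) * open_count Bs"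
proof -
  have B: "fst B \<noteq> []" "\<forall>x\<in>set (fst B). x < m" "B = (fst B, True)"
    using assms by (cases B; auto)+
  have "(\<Sum>C\<leftarrow>Bs. pair_weight \<alpha> \<beta> (fst B @ [m], fl) C)
      = (\<Sum>C\<leftarrow>Bs. pair_weight \<alpha> \<beta> B C) + \<beta> (ext_cls fl) * open_count Bs"
    using assms(1)
    by (induction Bs) (use B pair_weight_extended_left[OF B(1,2)] in \<open>auto simp: algebra_simps\<close>)
  then show ?thesis by simp
qed

lemma sep_weights_extend_block:
  assumes "blocks_below m Bs"
  shows "map (sep_weight \<alpha> \<beta>) (extend_block fl m Bs) =
    map (\<lambda>l. sep_weight \<alpha> \<beta> Bs + \<alpha> (ext_cls fl) * l + \<beta> (ext_cls fl) * (open_count Bs - 1 - l))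
      [0..<open_count Bs]"
  using assms
proof (induction Bs)
  case (Cons B Bs)
  let ?A = "\<alpha> (ext_cls fl)" and ?B = "\<beta> (ext_cls fl)"
  let ?w = "sep_weight \<alpha> \<beta> (B # Bs)" and ?o = "of_bool (snd B) :: nat" and ?h = "open_count Bs"
  have B: "fst B \<noteq> []" "\<forall>x\<in>set (fst B). x < m" and Bs: "blocks_below m Bs"
    using Cons.prems by auto
  have "map (sep_weight \<alpha> \<beta>) (map ((#) B) (extend_block fl m Bs))
      = map (\<lambda>l. ?w + ?A * (?o + l) + ?B * (?h - 1 - l)) [0..<?h]"
  proof -
    have "sep_weight \<alpha> \<beta> (B # P) = ?A * ?o + ?w - sep_weight \<alpha> \<beta> Bs + sep_weight \<alpha> \<beta> P"
      if "P \<in> set (extend_block fl m Bs)" for P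
      using sum_pair_weight_extend_block[OF Bs B that] by simp
    then have "map (sep_weight \<alpha> \<beta>) (map ((#) B) (extend_block fl m Bs))
        = map (\<lambda>w. ?A * ?o + ?w - sep_weight \<alpha> \<beta> Bs + w) (map (sep_weight \<alpha> \<beta>) (extend_block fl m Bs))"
      unfolding map_map by (intro map_cong refl) simp
    then show ?thesis unfolding Cons.IH[OF Bs] map_map by (simp add: o_def)
  qed
  moreover have "sep_weight \<alpha> \<beta> ((fst B @ [m], fl) # Bs) = ?w + ?B * ?h" if "snd B"
    using sep_weight_extended_front[OF Cons.prems that] .
  ultimately show ?case
    by (cases "snd B") (simp_all add: upt_conv_Cons map_Suc_upt[symmetric] del: upt_Suc)
qed simp

section \<open>The generating function of block sequences\<close>

definition admissible :: "(cls \<Rightarrow> nat) \<Rightarrow> (cls \<Rightarrow> nat) \<Rightarrow> bool" where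
  "admissible \<alpha> \<beta> \<longleftrightarrow> (\<forall>X. (\<alpha> X, \<beta> X) \<in> {(2, 1), (1, 2)})"

text \<open>The only place where the restriction on \<open>(\<alpha>, \<beta>)\<close> matters.\<close>
lemma sum_power_slots:
  assumes "(a, b) \<in> {(2::nat, 1::nat), (1, 2)}"
  shows "(\<Sum>l\<leftarrow>[0..<Suc h]. (q::'a::comm_ring_1) ^ (a * l + b * (h - l))) = slot_gf q h"
proof -
  have "(\<Sum>l\<leftarrow>[0..<Suc h]. q ^ (a * l + b * (h - l))) = (\<Sum>l<Suc h. q ^ (a * l + b * (h - l)))"
    by (simp only: interv_sum_list_conv_sum_set_nat set_upt atLeast0LessThan)
  also have "\<dots> = (\<Sum>l<Suc h. q ^ h * q ^ l)"
  proof (cases "a = 2")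
    case True
    with assms show ?thesis
      by (intro sum.cong) (auto simp: power_add[symmetric] add.commute)
  next
    case False
    have "(\<Sum>l<Suc h. q ^ (a * l + b * (h - l))) = (\<Sum>l<Suc h. q ^ h * q ^ (Suc h - Suc l))"
    proof (intro sum.cong refl)
      fix l assume "l \<in> {..<Suc h}"
      with False assms have "a * l + b * (h - l) = h + (Suc h - Suc l)" by auto
      then show "q ^ (a * l + b * (h - l)) = q ^ h * q ^ (Suc h - Suc l)" by (simp add: power_add)
    qed
    also have "\<dots> = (\<Sum>l<Suc h. q ^ h * q ^ l)"
      using sum.nat_diff_reindex[of "\<lambda>l. q ^ h * q ^ l" "Suc h"] by simp
    finally show ?thesis .
  qed
  finally show ?thesis by (simp only: slot_gf_def q_int_def sum_distrib_left)
qed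

definition stat_weight :: "(cls \<Rightarrow> nat) \<Rightarrow> (cls \<Rightarrow> nat) \<Rightarrow> block list \<Rightarrow> nat" where
  "stat_weight \<alpha> \<beta> P = (length P - 1) + sep_weight \<alpha> \<beta> P"

lemma gf_insert_block:
  assumes "blocks_below m P" "P \<noteq> []" "admissible \<alpha> \<beta>"
  shows "(\<Sum>P'\<leftarrow>insert_block fl m True P. (q::'a::comm_ring_1) ^ stat_weight \<alpha> \<beta> P')
    = q * slot_gf q (open_count P) * q ^ stat_weight \<alpha> \<beta> P"
proof -
  let ?A = "\<alpha> (new_cls fl)" and ?B = "\<beta> (new_cls fl)" and ?h = "open_count P"
  have "map (\<lambda>P'. q ^ stat_weight \<alpha> \<beta> P') (insert_block fl m True P)
      = map (\<lambda>w. q ^ (length P + w)) (map (sep_weight \<alpha> \<beta>) (insert_block fl m True P))"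
    by (auto simp: stat_weight_def length_insert_block)
  also have "\<dots> = map (\<lambda>l. q * q ^ stat_weight \<alpha> \<beta> P * q ^ (?A * l + ?B * (?h - l))) [0..<Suc ?h]"
    unfolding sep_weights_insert_block[OF assms(1)] map_map using assms(2)
    by (intro map_cong refl) (auto simp: stat_weight_def power_add ac_simps neq_Nil_conv)
  finally have "(\<Sum>P'\<leftarrow>insert_block fl m True P. q ^ stat_weight \<alpha> \<beta> P')
      = q * q ^ stat_weight \<alpha> \<beta> P * (\<Sum>l\<leftarrow>[0..<Suc ?h]. q ^ (?A * l + ?B * (?h - l)))"
    by (simp only: sum_list_const_mult)
  also have "\<dots> = q * q ^ stat_weight \<alpha> \<beta> P * slot_gf q ?h"
    using assms(3) by (subst sum_power_slots) (auto simp: admissible_def)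
  finally show ?thesis by (simp only: ac_simps)
qed

lemma gf_extend_block:
  assumes "blocks_below m P" "admissible \<alpha> \<beta>"
  shows "(\<Sum>P'\<leftarrow>extend_block fl m P. (q::'a::comm_ring_1) ^ stat_weight \<alpha> \<beta> P')
    = slot_gf_prev q (open_count P) * q ^ stat_weight \<alpha> \<beta> P"
proof (cases "open_count P")
  case 0
  then show ?thesis
    using sep_weights_extend_block[OF assms(1), of \<alpha> \<beta> fl] by (simp add: slot_gf_prev_def)
next
  case (Suc k)
  let ?A = "\<alpha> (ext_cls fl)" and ?B = "\<beta> (ext_cls fl)"
  have "map (\<lambda>P'. q ^ stat_weight \<alpha> \<beta> P') (extend_block fl m P)
      = map (\<lambda>w. q ^ (length P - 1 + w)) (map (sep_weight \<alpha> \<beta>) (extend_block fl m P))"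
    by (auto simp: stat_weight_def length_extend_block)
  also have "\<dots> = map (\<lambda>l. q ^ stat_weight \<alpha> \<beta> P * q ^ (?A * l + ?B * (k - l))) [0..<Suc k]"
    unfolding sep_weights_extend_block[OF assms(1)] map_map Suc
    by (intro map_cong refl) (auto simp: stat_weight_def power_add ac_simps)
  finally have "(\<Sum>P'\<leftarrow>extend_block fl m P. q ^ stat_weight \<alpha> \<beta> P')
      = q ^ stat_weight \<alpha> \<beta> P * (\<Sum>l\<leftarrow>[0..<Suc k]. q ^ (?A * l + ?B * (k - l)))"
    by (simp only: sum_list_const_mult)
  also have "\<dots> = q ^ stat_weight \<alpha> \<beta> P * slot_gf q k"
    using assms(2) by (subst sum_power_slots) (auto simp: admissible_def)
  finally show ?thesis using Suc by (simp add: slot_gf_prev_def ac_simps)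
qed

definition successors :: "nat \<Rightarrow> block list \<Rightarrow> block list list" where
  "successors m P = insert_block True m True P @ insert_block False m True P
     @ extend_block True m P @ extend_block False m P"

fun block_seqs :: "nat \<Rightarrow> block list list" where
  "block_seqs 0 = [[]]"
| "block_seqs (Suc m) = concat (map (successors (Suc m)) (block_seqs m))"

definition block_seqs_gf :: "(cls \<Rightarrow> nat) \<Rightarrow> (cls \<Rightarrow> nat) \<Rightarrow> 'a::comm_ring_1 \<Rightarrow> nat \<Rightarrow> nat \<Rightarrow> 'a" where
  "block_seqs_gf \<alpha> \<beta> q m h = (\<Sum>P\<leftarrow>block_seqs m. of_bool (open_count P = h) * q ^ stat_weight \<alpha> \<beta> P)"

lemma blocks_below_insert_block:
  "blocks_below m Bs \<Longrightarrow> P \<in> set (insert_block fl m a Bs) \<Longrightarrow> blocks_below (Suc m) P"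
  using arg_cong[OF insert_block_mset, of _ fl m a Bs set_mset]
  by (fastforce simp: blocks_below_def)

lemma blocks_below_extend_block:
  "blocks_below m Bs \<Longrightarrow> P \<in> set (extend_block fl m Bs) \<Longrightarrow> blocks_below (Suc m) P"
  by (induction Bs arbitrary: P)
    (auto split: if_splits simp: less_Suc_eq dest: blocks_below_mono[of m _ "Suc m"])

lemma blocks_below_block_seqs: "P \<in> set (block_seqs m) \<Longrightarrow> blocks_below (Suc m) P"
proof (induction m arbitrary: P)
  case (Suc m)
  then obtain P0 where "P0 \<in> set (block_seqs m)" "P \<in> set (successors (Suc m) P0)"
    by auto
  with Suc.IH show ?case
    by (auto simp: successors_def dest: blocks_below_insert_block blocks_below_extend_block)
qed (simp add: blocks_below_def)

lemma Nil_notin_extend_block: "[] \<notin> set (extend_block fl m Bs)"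
  by (induction Bs) auto

lemma block_seqs_Suc_nonempty: "P \<in> set (block_seqs (Suc m)) \<Longrightarrow> P \<noteq> []"
  using Nil_notin_extend_block by (auto simp: successors_def dest: length_insert_block)

lemma sum_list_map_concat: "(\<Sum>x\<leftarrow>concat xss. f x) = (\<Sum>xs\<leftarrow>xss. \<Sum>x\<leftarrow>xs. f x)"
  by (induction xss) auto

lemma sum_list_of_bool_const:
  assumes "\<And>x. x \<in> set xs \<Longrightarrow> g x = c"
  shows "(\<Sum>x\<leftarrow>xs. of_bool (g x = h) * f x) = of_bool (c = h) * (\<Sum>x\<leftarrow>xs. (f x :: 'a::semiring_1))"
  using assms by (induction xs) (auto simp: algebra_simps)

definition transition_gf :: "'a::comm_ring_1 \<Rightarrow> nat \<Rightarrow> nat \<Rightarrow> 'a" where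
  "transition_gf q k h = of_bool (Suc k = h) * q * slot_gf_prev q h
     + of_bool (k = h) * (q * slot_gf q h + slot_gf_prev q h) + of_bool (k = Suc h) * slot_gf q h"

lemma gf_successors:
  assumes "blocks_below m P" "P \<noteq> []" "admissible \<alpha> \<beta>"
  shows "(\<Sum>P'\<leftarrow>successors m P. of_bool (open_count P' = h) * (q::'a::comm_ring_1) ^ stat_weight \<alpha> \<beta> P')
    = transition_gf q (open_count P) h * q ^ stat_weight \<alpha> \<beta> P"
proof -
  let ?f = "\<lambda>P'. q ^ stat_weight \<alpha> \<beta> P'" and ?k = "open_count P"
  have new_open: "(\<Sum>P'\<leftarrow>insert_block True m True P. of_bool (open_count P' = h) * ?f P')
      = of_bool (Suc ?k = h) * q * slot_gf_prev q h * ?f P"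
    using sum_list_of_bool_const[of "insert_block True m True P" open_count "Suc ?k" h ?f]
      open_count_insert_block gf_insert_block[OF assms] by (auto simp: slot_gf_prev_def)
  have new_closed: "(\<Sum>P'\<leftarrow>insert_block False m True P. of_bool (open_count P' = h) * ?f P')
      = of_bool (?k = h) * q * slot_gf q h * ?f P"
    using sum_list_of_bool_const[of "insert_block False m True P" open_count ?k h ?f]
      open_count_insert_block gf_insert_block[OF assms] by auto
  have ext_open: "(\<Sum>P'\<leftarrow>extend_block True m P. of_bool (open_count P' = h) * ?f P')
      = of_bool (?k = h) * slot_gf_prev q h * ?f P"
    using sum_list_of_bool_const[of "extend_block True m P" open_count ?k h ?f]
      open_count_extend_block gf_extend_block[OF assms(1,3)] by fastforce
  have ext_closed: "(\<Sum>P'\<leftarrow>extend_block False m P. of_bool (open_count P' = h) * ?f P')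
      = of_bool (?k = Suc h) * slot_gf q h * ?f P"
  proof (cases ?k)
    case 0
    then have "extend_block False m P = []"
      using open_count_extend_block[of _ False m P] by (cases "extend_block False m P") auto
    then show ?thesis using 0 by simp
  next
    case (Suc k)
    then show ?thesis
      using sum_list_of_bool_const[of "extend_block False m P" open_count k h ?f]
        open_count_extend_block[of _ False m P] gf_extend_block[OF assms(1,3)]
      by (auto simp: slot_gf_prev_def)
  qed
  show ?thesis
    unfolding successors_def map_append sum_list_append new_open new_closed ext_open ext_closed
    by (simp add: transition_gf_def algebra_simps)
qed

lemma block_seqs_gf_Suc:
  assumes "m \<ge> 1" "admissible \<alpha> \<beta>"
  shows "block_seqs_gf \<alpha> \<beta> q (Suc m) h = q * slot_gf_prev q h * block_seqs_gf \<alpha> \<beta> q m (h - 1)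
     + (q * slot_gf q h + slot_gf_prev q h) * block_seqs_gf \<alpha> \<beta> q m h
     + slot_gf q h * block_seqs_gf \<alpha> \<beta> q m (Suc h)"
proof -
  let ?f = "\<lambda>P. q ^ stat_weight \<alpha> \<beta> P"
  have "block_seqs_gf \<alpha> \<beta> q (Suc m) h
      = (\<Sum>P\<leftarrow>block_seqs m. \<Sum>P'\<leftarrow>successors (Suc m) P. of_bool (open_count P' = h) * ?f P')"
    by (simp add: block_seqs_gf_def sum_list_map_concat o_def)
  also have "\<dots> = (\<Sum>P\<leftarrow>block_seqs m. transition_gf q (open_count P) h * ?f P)"
  proof (intro arg_cong[where f = sum_list] map_cong refl)
    fix P assume P: "P \<in> set (block_seqs m)"
    obtain m' where "m = Suc m'" using assms(1) by (cases m) auto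
    with P have "P \<noteq> []" using block_seqs_Suc_nonempty by blast
    then show "(\<Sum>P'\<leftarrow>successors (Suc m) P. of_bool (open_count P' = h) * ?f P')
      = transition_gf q (open_count P) h * ?f P"
      using gf_successors[OF blocks_below_block_seqs[OF P] _ assms(2)] by blast
  qed
  also have "\<dots> = q * slot_gf_prev q h * (\<Sum>P\<leftarrow>block_seqs m. of_bool (Suc (open_count P) = h) * ?f P)
     + (q * slot_gf q h + slot_gf_prev q h) * block_seqs_gf \<alpha> \<beta> q m h
     + slot_gf q h * block_seqs_gf \<alpha> \<beta> q m (Suc h)"
    by (simp add: block_seqs_gf_def transition_gf_def sum_list_addf sum_list_const_mult algebra_simps)
  also have "q * slot_gf_prev q h * (\<Sum>P\<leftarrow>block_seqs m. of_bool (Suc (open_count P) = h) * ?f P)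
      = q * slot_gf_prev q h * block_seqs_gf \<alpha> \<beta> q m (h - 1)"
    by (cases h) (simp_all add: slot_gf_prev_def block_seqs_gf_def)
  finally show ?thesis .
qed

lemma block_seqs_gf_eq:
  assumes "m \<ge> 1" "admissible \<alpha> \<beta>"
  shows "block_seqs_gf \<alpha> \<beta> q m h = q_fact m q * esym q m h"
  using assms(1)
proof (induction m arbitrary: h rule: dec_induct)
  case base
  have "block_seqs 1 = [[([1], True)], [([1], False)]]"
    by (simp add: successors_def)
  then show ?case
    by (cases h) (auto simp: block_seqs_gf_def stat_weight_def q_fact_def q_int_def esym_var_def)
next
  case (step m)
  have "block_seqs_gf \<alpha> \<beta> q (Suc m) h = q_fact m q * (q * slot_gf_prev q h * esym q m (h - 1)
      + (q * slot_gf q h + slot_gf_prev q h) * esym q m h + slot_gf q h * esym q m (Suc h))"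
    by (simp add: block_seqs_gf_Suc[OF step(1) assms(2)] step(3) algebra_simps)
  also have "\<dots> = q_fact (Suc m) q * esym q (Suc m) h"
    unfolding esym_recurrence[OF step(1), symmetric] q_fact_Suc by (simp only: ac_simps)
  finally show ?case .
qed

section \<open>Closed block sequences are the permutations cut into runs\<close>

definition remove_value :: "nat \<Rightarrow> block list \<Rightarrow> block list" where
  "remove_value m P = concat (map (\<lambda>B. if fst B = [m] then []
     else if m \<in> set (fst B) then [(butlast (fst B), True)] else [B]) P)"

lemma remove_value_Nil [simp]: "remove_value m [] = []"
  by (simp add: remove_value_def)

lemma remove_value_Cons [simp]:
  "remove_value m (B # P) = (if fst B = [m] then []
     else if m \<in> set (fst B) then [(butlast (fst B), True)] else [B]) @ remove_value m P"
  by (simp add: remove_value_def)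

lemma remove_value_below: "blocks_below m Bs \<Longrightarrow> remove_value m Bs = Bs"
  by (induction Bs) auto

lemma remove_value_insert_block:
  "blocks_below m Bs \<Longrightarrow> P \<in> set (insert_block fl m a Bs) \<Longrightarrow> remove_value m P = Bs"
  by (induction Bs arbitrary: a P) (auto simp: remove_value_below split: if_splits)

lemma remove_value_extend_block:
  "blocks_below m Bs \<Longrightarrow> P \<in> set (extend_block fl m Bs) \<Longrightarrow> remove_value m P = Bs"
proof (induction Bs arbitrary: P)
  case (Cons B Bs)
  then have "fst B \<noteq> []" "m \<notin> set (fst B)" by auto
  with Cons show ?case
    by (cases B) (auto simp: remove_value_below split: if_splits)
qed simp

lemma remove_value_successors:
  "blocks_below m Bs \<Longrightarrow> P \<in> set (successors m Bs) \<Longrightarrow> remove_value m P = Bs"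
  unfolding successors_def using remove_value_insert_block remove_value_extend_block by auto

lemma distinct_insert_block: "blocks_below m Bs \<Longrightarrow> distinct (insert_block fl m a Bs)"
proof (induction Bs arbitrary: a)
  case (Cons B Bs)
  then have "([m], fl) \<noteq> B" by (cases B) auto
  with Cons show ?case by (auto simp: distinct_map)
qed simp

lemma distinct_extend_block: "distinct (extend_block fl m Bs)"
proof (induction Bs)
  case (Cons B Bs)
  have "(fst B @ [m], fl) \<noteq> B" by (cases B) auto
  with Cons show ?case by (auto simp: distinct_map)
qed simp

lemma distinct_successors: "blocks_below m Bs \<Longrightarrow> distinct (successors m Bs)"
proof -
  assume below: "blocks_below m Bs"
  have "set (insert_block True m True Bs) \<inter> set (insert_block False m True Bs) = {}"
    using open_count_insert_block[of _ True m True Bs] open_count_insert_block[of _ False m True Bs]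
    by fastforce
  moreover have "set (insert_block fl m True Bs) \<inter> set (extend_block fl' m Bs) = {}" for fl fl'
    using length_insert_block[of _ fl m True Bs] length_extend_block[of _ fl' m Bs] by fastforce
  moreover have "set (extend_block True m Bs) \<inter> set (extend_block False m Bs) = {}"
    using open_count_extend_block[of _ True m Bs] open_count_extend_block[of _ False m Bs]
    by fastforce
  ultimately show ?thesis
    unfolding successors_def using below distinct_insert_block distinct_extend_block by auto
qed

lemma distinct_block_seqs: "distinct (block_seqs m)"
proof (induction m)
  case (Suc m)
  have below: "blocks_below (Suc m) P" if "P \<in> set (block_seqs m)" for P
    using blocks_below_block_seqs[OF that] .
  have "successors (Suc m) P \<noteq> []" for P
    by (cases P) (auto simp: successors_def)
  then have "inj_on (successors (Suc m)) (set (block_seqs m))"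
    using remove_value_successors below by (metis inj_onI last_in_set)
  show ?case
    unfolding block_seqs.simps
  proof (rule distinct_concat)
    show "distinct (map (successors (Suc m)) (block_seqs m))"
      using Suc \<open>inj_on (successors (Suc m)) (set (block_seqs m))\<close> by (simp add: distinct_map)
  next
    fix Ps assume "Ps \<in> set (map (successors (Suc m)) (block_seqs m))"
    then show "distinct Ps" using below distinct_successors by auto
  next
    fix Ps Qs
    assume "Ps \<in> set (map (successors (Suc m)) (block_seqs m))"
      "Qs \<in> set (map (successors (Suc m)) (block_seqs m))" "Ps \<noteq> Qs"
    then obtain P1 P2 where "P1 \<in> set (block_seqs m)" "P2 \<in> set (block_seqs m)"
      "Ps = successors (Suc m) P1" "Qs = successors (Suc m) P2" "P1 \<noteq> P2"
      by auto
    then show "set Ps \<inter> set Qs = {}"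
      using remove_value_successors below by blast
  qed
qed simp

definition word :: "block list \<Rightarrow> nat list" where
  "word P = concat (map fst P)"

definition run_break :: "block \<Rightarrow> block \<Rightarrow> bool" where
  "run_break B C \<longleftrightarrow> snd B \<or> hd (fst C) < last (fst B)"

definition well_formed :: "nat \<Rightarrow> block list \<Rightarrow> bool" where
  "well_formed n P \<longleftrightarrow> mset (word P) = mset [1..<Suc n]
     \<and> (\<forall>B\<in>set P. sorted_wrt (<) (fst B)) \<and> successively run_break P"

lemma mset_word_insert_block:
  "P \<in> set (insert_block fl m a Bs) \<Longrightarrow> mset (word P) = add_mset m (mset (word Bs))"
  by (induction Bs arbitrary: a P) (auto simp: word_def split: if_splits)

lemma mset_word_extend_block:
  "P \<in> set (extend_block fl m Bs) \<Longrightarrow> mset (word P) = add_mset m (mset (word Bs))"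
  by (induction Bs arbitrary: P) (auto simp: word_def split: if_splits)

lemma sorted_blocks_insert_block:
  "\<forall>B\<in>set Bs. sorted_wrt (<) (fst B) \<Longrightarrow> P \<in> set (insert_block fl m a Bs)
    \<Longrightarrow> \<forall>B\<in>set P. sorted_wrt (<) (fst B)"
  using arg_cong[OF insert_block_mset, of P fl m a Bs set_mset] by auto

lemma sorted_blocks_extend_block:
  "blocks_below m Bs \<Longrightarrow> \<forall>B\<in>set Bs. sorted_wrt (<) (fst B) \<Longrightarrow> P \<in> set (extend_block fl m Bs)
    \<Longrightarrow> \<forall>B\<in>set P. sorted_wrt (<) (fst B)"
proof (induction Bs arbitrary: P)
  case (Cons B Bs)
  from Cons.prems(3) consider "P = (fst B @ [m], fl) # Bs"
    | R where "R \<in> set (extend_block fl m Bs)" "P = B # R"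
    by (auto split: if_splits)
  then show ?case
  proof cases
    case 1
    then show ?thesis using Cons.prems(1,2) by (auto simp: sorted_wrt_append)
  next
    case 2
    then show ?thesis using Cons.IH[of R] Cons.prems(1,2) by simp
  qed
qed simp

lemma run_break_new_left: "fst C \<noteq> [] \<Longrightarrow> \<forall>x\<in>set (fst C). x < m \<Longrightarrow> run_break ([m], fl) C"
  by (cases "fst C") (auto simp: run_break_def)

lemma run_break_extended_left:
  "fst C \<noteq> [] \<Longrightarrow> \<forall>x\<in>set (fst C). x < m \<Longrightarrow> run_break (b @ [m], fl) C"
  by (cases "fst C") (auto simp: run_break_def)

lemma run_break_extended_right: "b \<noteq> [] \<Longrightarrow> run_break B0 (b @ [m], fl) \<longleftrightarrow> run_break B0 (b, True)"
  by (cases b) (auto simp: run_break_def)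

lemma successively_insert_block_after:
  "blocks_below m Bs \<Longrightarrow> successively run_break (B0 # Bs)
    \<Longrightarrow> P \<in> set (insert_block fl m (snd B0) Bs) \<Longrightarrow> successively run_break (B0 # P)"
proof (induction Bs arbitrary: B0 P)
  case Nil
  then show ?case by (auto simp: run_break_def split: if_splits)
next
  case (Cons B Bs)
  from Cons.prems(3) consider "snd B0" "P = ([m], fl) # B # Bs"
    | R where "R \<in> set (insert_block fl m (snd B) Bs)" "P = B # R"
    by (auto split: if_splits)
  then show ?case
  proof cases
    case 1
    have "run_break ([m], fl) B" using Cons.prems(1) by (simp add: run_break_new_left)
    with 1 Cons.prems(2) show ?thesis by (simp add: run_break_def)
  next
    case 2
    have "successively run_break (B # R)"
      using Cons.IH[of B R] Cons.prems(1,2) 2(1) by simp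
    with 2(2) Cons.prems(2) show ?thesis by simp
  qed
qed

lemma successively_insert_block:
  assumes "blocks_below m Bs" "successively run_break Bs" "P \<in> set (insert_block fl m True Bs)"
  shows "successively run_break P"
proof -
  \<comment> \<open>a dummy open block in front makes the front an ordinary position after an open block\<close>
  have "successively run_break (([], True) # Bs)"
    using assms(2) by (cases Bs) (simp_all add: run_break_def)
  then have "successively run_break (([], True) # P)"
    using successively_insert_block_after[OF assms(1)] assms(3) by simp
  then show ?thesis by (cases P) simp_all
qed

lemma successively_extend_block_after:
  "blocks_below m Bs \<Longrightarrow> successively run_break (B0 # Bs)
    \<Longrightarrow> P \<in> set (extend_block fl m Bs) \<Longrightarrow> successively run_break (B0 # P)"
proof (induction Bs arbitrary: B0 P)
  case (Cons B Bs)
  from Cons.prems(3) consider "snd B" "P = (fst B @ [m], fl) # Bs"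
    | R where "R \<in> set (extend_block fl m Bs)" "P = B # R"
    by (auto split: if_splits)
  then show ?case
  proof cases
    case 1
    obtain b where B: "B = (b, True)" "b \<noteq> []" using 1(1) Cons.prems(1) by (cases B) auto
    have "run_break B0 B" using Cons.prems(2) by simp
    then have "run_break B0 (fst B @ [m], fl)" using run_break_extended_right[OF B(2)] B(1) by simp
    moreover have "Bs = [] \<or> run_break (fst B @ [m], fl) (hd Bs)"
      using Cons.prems(1) by (cases Bs) (simp_all add: run_break_extended_left)
    ultimately show ?thesis using 1(2) Cons.prems(2) by (cases Bs) simp_all
  next
    case 2
    have "successively run_break (B # R)"
      using Cons.IH[of B R] Cons.prems(1,2) 2(1) by simp
    with 2(2) Cons.prems(2) show ?thesis by simp
  qed
qed simp

lemma successively_extend_block: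
  assumes "blocks_below m Bs" "successively run_break Bs" "P \<in> set (extend_block fl m Bs)"
  shows "successively run_break P"
proof -
  have "successively run_break (([], True) # Bs)"
    using assms(2) by (cases Bs) (simp_all add: run_break_def)
  then have "successively run_break (([], True) # P)"
    using successively_extend_block_after[OF assms(1)] assms(3) by simp
  then show ?thesis by (cases P) simp_all
qed

lemma well_formed_block_seqs: "P \<in> set (block_seqs m) \<Longrightarrow> well_formed m P"
proof (induction m arbitrary: P)
  case (Suc m)
  then obtain P0 where P0: "P0 \<in> set (block_seqs m)" "P \<in> set (successors (Suc m) P0)"
    by auto
  have below: "blocks_below (Suc m) P0" using blocks_below_block_seqs[OF P0(1)] .
  have wf: "well_formed m P0" using Suc.IH[OF P0(1)] .
  obtain fl where P: "P \<in> set (insert_block fl (Suc m) True P0) \<or> P \<in> set (extend_block fl (Suc m) P0)"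
    using P0(2) by (auto simp: successors_def)
  then have "mset (word P) = add_mset (Suc m) (mset (word P0))"
    using mset_word_insert_block mset_word_extend_block by blast
  with wf have "mset (word P) = mset [1..<Suc (Suc m)]"
    by (simp add: well_formed_def)
  moreover have "\<forall>B\<in>set P. sorted_wrt (<) (fst B)" "successively run_break P"
    using P below wf[unfolded well_formed_def] sorted_blocks_insert_block sorted_blocks_extend_block
      successively_insert_block successively_extend_block by blast+
  ultimately show ?case by (simp add: well_formed_def)
qed (simp add: well_formed_def word_def)

lemma runs_append_run:
  assumes "b \<noteq> []" "sorted_wrt (<) b" "rest = [] \<or> hd rest < last b"
  shows "runs (b @ rest) = b # runs rest"
  using assms
proof (induction b rule: induct_list012)
  case (2 x)
  then show ?case by (cases rest) auto
next
  case (3 x y zs)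
  then show ?case by (simp add: Let_def)
qed simp

lemma runs_word:
  assumes "open_count P = 0" "\<forall>B\<in>set P. fst B \<noteq> [] \<and> sorted_wrt (<) (fst B)"
    and "successively run_break P"
  shows "runs (word P) = map fst P"
  using assms
proof (induction P)
  case (Cons B P)
  have closed: "\<not> snd B" "open_count P = 0" using Cons.prems(1) by simp_all
  have "word P = [] \<or> hd (word P) < last (fst B)"
  proof (cases P)
    case (Cons C P')
    with Cons.prems(2,3) closed(1) show ?thesis by (simp add: word_def run_break_def)
  qed (simp add: word_def)
  then have "runs (fst B @ word P) = fst B # runs (word P)"
    using Cons.prems(2) by (intro runs_append_run) simp_all
  moreover have "successively run_break P"
    using Cons.prems(3) by (cases P) simp_all
  ultimately show ?case
    using Cons.IH closed(2) Cons.prems(2) by (simp add: word_def)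
qed (simp add: word_def)

lemma sep_weight_eq_pairs:
  "sep_weight \<alpha> \<beta> P = (\<Sum>j<length P. \<Sum>j'<j. pair_weight \<alpha> \<beta> (P ! j') (P ! j))"
proof (induction P)
  case (Cons B P)
  have "(\<Sum>j<length (B # P). \<Sum>j'<j. pair_weight \<alpha> \<beta> ((B # P) ! j') ((B # P) ! j))
      = (\<Sum>j<length P. pair_weight \<alpha> \<beta> B (P ! j) + (\<Sum>j'<j. pair_weight \<alpha> \<beta> (P ! j') (P ! j)))"
    by (simp only: length_Cons sum.lessThan_Suc_shift nth_Cons_0 nth_Cons_Suc) simp
  also have "\<dots> = sep_weight \<alpha> \<beta> (B # P)"
    using Cons.IH by (simp add: sum.distrib sum_list_sum_nth atLeast0LessThan)
  finally show ?case ..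
qed simp

lemma sum_upper_triangle_swap:
  "(\<Sum>j<n. \<Sum>j'\<in>{Suc j..<n}. g j j') = (\<Sum>j'<n. \<Sum>j<j'. (g j j' :: 'a::comm_monoid_add))"
  by (induction n) (simp_all add: sum.distrib)

lemma sum_list_mult_sum:
  "(\<Sum>i\<leftarrow>xs. c i * (\<Sum>j\<in>A. f i j)) = (\<Sum>j\<in>A. \<Sum>i\<leftarrow>xs. c i * (f i j :: 'a::comm_semiring_0))"
  by (induction xs) (simp_all add: sum_distrib_left sum.distrib)

lemma sep_weight_elementwise:
  "sep_weight \<alpha> \<beta> P = (\<Sum>j<length P. \<Sum>i\<leftarrow>fst (P ! j).
      \<alpha> (blk_cls (P ! j) i) * (\<Sum>j'<j. of_bool (blk_separates (P ! j') i))
    + \<beta> (blk_cls (P ! j) i) * (\<Sum>j'\<in>{Suc j..<length P}. of_bool (blk_separates (P ! j') i)))"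
proof -
  let ?n = "length P"
  have "(\<Sum>j<?n. \<Sum>i\<leftarrow>fst (P ! j).
      \<alpha> (blk_cls (P ! j) i) * (\<Sum>j'<j. of_bool (blk_separates (P ! j') i))
    + \<beta> (blk_cls (P ! j) i) * (\<Sum>j'\<in>{Suc j..<?n}. of_bool (blk_separates (P ! j') i)))
    = (\<Sum>j<?n. \<Sum>j'<j. left_weight \<alpha> (P ! j') (P ! j))
      + (\<Sum>j<?n. \<Sum>j'\<in>{Suc j..<?n}. right_weight \<beta> (P ! j) (P ! j'))"
    by (simp add: sum_list_addf sum.distrib sum_list_mult_sum left_weight_def right_weight_def
        del: sum_of_bool_eq)
  also have "\<dots> = (\<Sum>j<?n. \<Sum>j'<j. pair_weight \<alpha> \<beta> (P ! j') (P ! j))"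
    by (simp add: sum_upper_triangle_swap pair_weight_def sum.distrib)
  finally show ?thesis by (simp add: sep_weight_eq_pairs)
qed

lemma sum_classes_eq_sum_elements:
  "(\<Sum>X\<in>{Sing, Cont, Op, Clos}. \<alpha> X * lsg_cls X \<sigma> + \<beta> X * rsg_cls X \<sigma>)
    = (\<Sum>i\<in>set \<sigma>. \<alpha> (cls_of \<sigma> i) * lsg \<sigma> i + \<beta> (cls_of \<sigma> i) * rsg \<sigma> i)"
proof -
  have "cls_of \<sigma> ` set \<sigma> \<subseteq> {Sing, Cont, Op, Clos}"
    using cls.exhaust by blast
  then have "(\<Sum>i\<in>set \<sigma>. \<alpha> (cls_of \<sigma> i) * lsg \<sigma> i + \<beta> (cls_of \<sigma> i) * rsg \<sigma> i)
      = (\<Sum>X\<in>{Sing, Cont, Op, Clos}. \<Sum>i\<in>{i\<in>set \<sigma>. cls_of \<sigma> i = X}.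
           \<alpha> (cls_of \<sigma> i) * lsg \<sigma> i + \<beta> (cls_of \<sigma> i) * rsg \<sigma> i)"
    by (intro sum.group[symmetric]) auto
  also have "\<dots> = (\<Sum>X\<in>{Sing, Cont, Op, Clos}. \<alpha> X * lsg_cls X \<sigma> + \<beta> X * rsg_cls X \<sigma>)"
    unfolding lsg_cls_def rsg_cls_def
    by (intro sum.cong refl) (simp add: sum_distrib_left sum.distrib)
  finally show ?thesis ..
qed

lemma distinct_concat_nth_unique:
  assumes "distinct (concat xs)" "j < length xs" "j' < length xs" "x \<in> set (xs ! j)" "x \<in> set (xs ! j')"
  shows "j' = j"
  using assms
proof (induction xs arbitrary: j j')
  case (Cons ys xs)
  have tail: "x \<in> set (concat xs)" if "k < length xs" "x \<in> set (xs ! k)" for k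
    using that nth_mem by fastforce
  have "set ys \<inter> set (concat xs) = {}" "distinct (concat xs)" using Cons.prems(1) by auto
  with Cons.prems(2-5) tail show ?case
    by (cases j; cases j') (auto dest: Cons.IH)
qed simp

lemma distinct_word: "well_formed n P \<Longrightarrow> distinct (word P)"
  using mset_eq_imp_distinct_iff[of "word P" "[1..<Suc n]"] by (simp add: well_formed_def)

lemma runs_closed_word:
  assumes "well_formed n P" "open_count P = 0" "blocks_below (Suc n) P"
  shows "runs (word P) = map fst P"
  using runs_word[OF assms(2)] assms(1,3) by (simp add: well_formed_def blocks_below_def)

lemma closed_word_elements:
  assumes wf: "well_formed n P" and closed: "open_count P = 0" and below: "blocks_below (Suc n) P"
    and j: "j < length P" and i: "i \<in> set (fst (P ! j))"
  shows "cls_of (word P) i = blk_cls (P ! j) i"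
    and "lsg (word P) i = (\<Sum>j'<j. of_bool (blk_separates (P ! j') i))"
    and "rsg (word P) i = (\<Sum>j'\<in>{Suc j..<length P}. of_bool (blk_separates (P ! j') i))"
proof -
  have runs: "runs (word P) = map fst P" using runs_closed_word[OF wf closed below] .
  have not_open: "\<not> snd (P ! k)" if "k < length P" for k
    using closed that by (auto simp: open_count_def filter_empty_conv)
  have separates: "separates (runs (word P) ! k) i \<longleftrightarrow> blk_separates (P ! k) i" if "k < length P" for k
    using runs not_open[OF that] that by (simp add: separates_def blk_separates_def)
  have "run_idx (word P) i = j"
    unfolding run_idx_def runs
  proof (rule the_equality)
    fix j' assume "j' < length (map fst P) \<and> i \<in> set (map fst P ! j')"
    then show "j' = j"
      using distinct_concat_nth_unique[of "map fst P" j j' i] distinct_word[OF wf] j i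
      by (auto simp: word_def)
  qed (use j i in simp)
  then show "cls_of (word P) i = blk_cls (P ! j) i"
    using runs not_open[OF j] j by (simp add: cls_of_def blk_cls_def)
  show "lsg (word P) i = (\<Sum>j'<j. of_bool (blk_separates (P ! j') i))"
    using \<open>run_idx (word P) i = j\<close> separates j unfolding lsg_def
    by (auto intro!: arg_cong[where f = card])
  show "rsg (word P) i = (\<Sum>j'\<in>{Suc j..<length P}. of_bool (blk_separates (P ! j') i))"
    using \<open>run_idx (word P) i = j\<close> separates runs unfolding rsg_def
    by (auto intro!: arg_cong[where f = card])
qed

lemma statistic_closed_word:
  assumes wf: "well_formed n P" and closed: "open_count P = 0" and below: "blocks_below (Suc n) P"
  shows "run (word P) - 1 + (\<Sum>X\<in>{Sing, Cont, Op, Clos}.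
      \<alpha> X * lsg_cls X (word P) + \<beta> X * rsg_cls X (word P)) = stat_weight \<alpha> \<beta> P"
proof -
  let ?w = "word P"
  let ?h = "\<lambda>i. \<alpha> (cls_of ?w i) * lsg ?w i + \<beta> (cls_of ?w i) * rsg ?w i"
  have "(\<Sum>X\<in>{Sing, Cont, Op, Clos}. \<alpha> X * lsg_cls X ?w + \<beta> X * rsg_cls X ?w) = (\<Sum>i\<leftarrow>?w. ?h i)"
    using distinct_word[OF wf] by (simp add: sum_classes_eq_sum_elements sum_list_distinct_conv_sum_set)
  also have "\<dots> = (\<Sum>B\<leftarrow>P. \<Sum>i\<leftarrow>fst B. ?h i)"
    by (simp add: word_def sum_list_map_concat o_def)
  also have "\<dots> = (\<Sum>j<length P. \<Sum>i\<leftarrow>fst (P ! j). ?h i)"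
    using sum_list_sum_nth[of "map (\<lambda>B. \<Sum>i\<leftarrow>fst B. ?h i) P"] by (simp add: atLeast0LessThan)
  also have "\<dots> = sep_weight \<alpha> \<beta> P"
    unfolding sep_weight_elementwise
    using closed_word_elements[OF wf closed below] by (intro sum.cong arg_cong[where f = sum_list] map_cong) auto
  finally show ?thesis
    using runs_closed_word[OF assms] by (simp add: stat_weight_def run_def)
qed

lemma q_fact_1: "q_fact n (1::'a::comm_ring_1) = of_nat (fact n)"
  by (simp add: q_fact_def q_int_def fact_prod)

lemma length_closed_block_seqs:
  assumes "n \<ge> 1"
  shows "length (filter (\<lambda>P. open_count P = 0) (block_seqs n)) = fact n"
proof -
  have count: "(\<Sum>x\<leftarrow>xs. of_bool (p x)) = int (length (filter p xs))" for p and xs :: "'b list"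
    by (induction xs) auto
  have "admissible (\<lambda>_. 2) (\<lambda>_. 1)" by (simp add: admissible_def)
  from block_seqs_gf_eq[OF assms this, of "1 :: int" 0]
  have "int (length (filter (\<lambda>P. open_count P = 0) (block_seqs n))) = int (fact n)"
    by (simp add: block_seqs_gf_def count q_fact_1)
  then show ?thesis by (metis of_nat_eq_iff of_nat_fact)
qed

lemma words_closed_block_seqs:
  assumes "n \<ge> 1"
  defines "C \<equiv> filter (\<lambda>P. open_count P = 0) (block_seqs n)"
  shows "distinct (map word C)" and "set (map word C) = permutations_of_set {1..n}"
proof -
  have props: "well_formed n P" "open_count P = 0" "blocks_below (Suc n) P" if "P \<in> set C" for P
    using that well_formed_block_seqs blocks_below_block_seqs by (auto simp: C_def)
  have "P = map (\<lambda>b. (b, False)) (runs (word P))" if "P \<in> set C" for P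
  proof -
    have "\<forall>B\<in>set P. \<not> snd B" using props(2)[OF that] by (simp add: open_count_def filter_empty_conv)
    then show ?thesis
      unfolding runs_closed_word[OF props[OF that]] by (induction P) auto
  qed
  then have "inj_on word (set C)"
    by (metis inj_onI)
  then show distinct: "distinct (map word C)"
    using distinct_block_seqs by (simp add: C_def distinct_map)
  have "set (map word C) \<subseteq> permutations_of_set {1..n}"
  proof
    fix w assume "w \<in> set (map word C)"
    then obtain P where "P \<in> set C" "w = word P" by auto
    then have "mset w = mset [1..<Suc n]" using props by (simp add: well_formed_def)
    then show "w \<in> permutations_of_set {1..n}"
      using mset_eq_setD[of w] mset_eq_imp_distinct_iff[of w]
      by (auto simp: permutations_of_set_def atLeastLessThanSuc_atLeastAtMost)
  qed
  \<comment> \<open>surjectivity by counting: there are \<open>n!\<close> closed sequences\<close>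
  moreover have "card (set (map word C)) = card (permutations_of_set {1..n})"
    using distinct_card[OF distinct] length_closed_block_seqs[OF assms(1)] by (simp add: C_def)
  ultimately show "set (map word C) = permutations_of_set {1..n}"
    by (intro card_subset_eq) simp_all
qed

theorem mainTheorem5:
  fixes \<alpha> \<beta> :: "cls \<Rightarrow> nat" and n :: nat and q :: "'a::comm_ring_1"
  assumes "\<And>X. (\<alpha> X, \<beta> X) \<in> {(2,1), (1,2)}"
    and "n \<ge> 1"
  shows "(\<Sum>\<sigma>\<in>permutations_of_set {1..n}.
            q ^ (run \<sigma> - 1 + (\<Sum>X\<in>{Sing, Cont, Op, Clos}.
                   \<alpha> X * lsg_cls X \<sigma> + \<beta> X * rsg_cls X \<sigma>)))
         = q_fact n q"
proof -
  let ?C = "filter (\<lambda>P. open_count P = 0) (block_seqs n)"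
  let ?F = "\<lambda>\<sigma>. q ^ (run \<sigma> - 1 + (\<Sum>X\<in>{Sing, Cont, Op, Clos}.
                   \<alpha> X * lsg_cls X \<sigma> + \<beta> X * rsg_cls X \<sigma>))"
  have "(\<Sum>\<sigma>\<in>permutations_of_set {1..n}. ?F \<sigma>) = (\<Sum>P\<leftarrow>?C. ?F (word P))"
    using words_closed_block_seqs[OF assms(2)] sum_list_distinct_conv_sum_set[of "map word ?C" ?F]
    by (simp add: o_def)
  also have "\<dots> = (\<Sum>P\<leftarrow>?C. q ^ stat_weight \<alpha> \<beta> P)"
  proof (intro arg_cong[where f = sum_list] map_cong refl)
    fix P assume "P \<in> set ?C"
    then have "P \<in> set (block_seqs n)" "open_count P = 0" by simp_all
    then show "?F (word P) = q ^ stat_weight \<alpha> \<beta> P"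
      using statistic_closed_word[OF well_formed_block_seqs _ blocks_below_block_seqs] by simp
  qed
  also have "\<dots> = block_seqs_gf \<alpha> \<beta> q n 0"
    unfolding block_seqs_gf_def sum_list_map_filter' by (intro arg_cong[where f = sum_list] map_cong) auto
  also have "\<dots> = q_fact n q"
    using block_seqs_gf_eq[OF assms(2), of \<alpha> \<beta> q 0] assms(1) by (simp add: admissible_def)
  finally show ?thesis .
qed

end
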